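(* Let $K\le P$ be positive integers, $\theta=(K,P)$, and $n\ge 3$. Then $\mathbb{E}[\chi_{123}(\theta)]=\beta(\theta)$, and consequently $\mathbb{E}[T_n(\theta)]=\binom{n}{3}\beta(\theta)$.
   Context: Random key graph: fix positive integers $K\le P$ and write $\theta=(K,P)$. For $n\ge 3$, let $K_1(\theta),\dots,K_n(\theta)$ be i.i.d. random subsets of $\{1,\dots,P\}$, each uniformly distributed over the $\binom{P}{K}$ subsets of size $K$. The random key graph $\mathbb{K}(n;\theta)$ on vertex set $\{1,\dots,n\}$ has an edge between distinct $i,j$ iff $K_i(\theta)\cap K_j(\theta)\neq\emptyset$. Define $q(\theta)=\binom{P-K}{K}/\binom{P}{K}$ if $2K\le P$ and $q(\theta)=0$ if $P<2K$ (so $q(\theta)$ is the probability that two given nodes are not adjacent); $p(\theta)=1-q(\theta)$; $r(\theta)=\binom{P-2K}{K}/\binom{P}{K}$ if $3K\le P$ and $r(\theta)=0$ if $P<3K$; $\beta(\theta)=(1-q(\theta))^3+q(\theta)^3-q(\theta)r(\theta)$. For distinct $i,j,k$, $\chi_{ijk}(\theta)$ is the indicator that nodes $i,j,k$ form a triangle in $\mathbb{K}(n;\theta)$, and $T_n(\theta)=\sum_{1\le i<j<k\le n}\chi_{ijk}(\theta)$ is the number of triangles. *)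

theory Defs
  imports "HOL-Probability.Probability"
begin

definition key_ring_pmf :: "nat \<Rightarrow> nat \<Rightarrow> nat set pmf" where
  "key_ring_pmf K P = pmf_of_set {S. S \<subseteq> {1..P} \<and> card S = K}"

definition key_rings_pmf :: "nat \<Rightarrow> nat \<Rightarrow> nat \<Rightarrow> (nat \<Rightarrow> nat set) pmf" where
  "key_rings_pmf n K P = Pi_pmf {1..n} {} (\<lambda>_. key_ring_pmf K P)"

definition rkg_adj :: "(nat \<Rightarrow> nat set) \<Rightarrow> nat \<Rightarrow> nat \<Rightarrow> bool" where
  "rkg_adj Ks i j \<longleftrightarrow> i \<noteq> j \<and> Ks i \<inter> Ks j \<noteq> {}"

definition chi :: "(nat \<Rightarrow> nat set) \<Rightarrow> nat \<Rightarrow> nat \<Rightarrow> nat \<Rightarrow> real" where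
  "chi Ks i j k = (if rkg_adj Ks i j \<and> rkg_adj Ks j k \<and> rkg_adj Ks i k then 1 else 0)"

definition triangles :: "nat \<Rightarrow> (nat \<Rightarrow> nat set) \<Rightarrow> real" where
  "triangles n Ks = (\<Sum>(i,j,k) \<in> {(i,j,k). 1 \<le> i \<and> i < j \<and> j < k \<and> k \<le> n}. chi Ks i j k)"

definition q_rkg :: "nat \<Rightarrow> nat \<Rightarrow> real" where
  "q_rkg K P = (if 2 * K \<le> P then real ((P - K) choose K) / real (P choose K) else 0)"

definition p_rkg :: "nat \<Rightarrow> nat \<Rightarrow> real" where
  "p_rkg K P = 1 - q_rkg K P"

definition r_rkg :: "nat \<Rightarrow> nat \<Rightarrow> real" where
  "r_rkg K P = (if 3 * K \<le> P then real ((P - 2 * K) choose K) / real (P choose K) else 0)"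

definition beta_rkg :: "nat \<Rightarrow> nat \<Rightarrow> real" where
  "beta_rkg K P = (1 - q_rkg K P) ^ 3 + q_rkg K P ^ 3 - q_rkg K P * r_rkg K P"

end

theory Submission
  imports Defs
begin

text \<open>The key rings a, b, c of three distinct nodes are independent uniform K-subsets of
  {1..P}. By inclusion-exclusion over the three non-adjacency events, the triangle probability is
  1 - 3q + 3 P(a \<inter> b = a \<inter> c = {}) - P(a, b, c pairwise disjoint). Conditioning on a,
  the middle term is q^2; conditioning on disjoint a and b, the ring c has to avoid the
  2K-element set a \<union> b, which happens with probability r. Hence the probability is
  1 - 3q + 3q^2 - qr = beta, and linearity of expectation over the (n choose 3) triples
  gives E[T_n].\<close>

lemma pair_pmf_of_set:
  assumes "finite A" "A \<noteq> {}" "finite B" "B \<noteq> {}"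
  shows "pair_pmf (pmf_of_set A) (pmf_of_set B) = pmf_of_set (A \<times> B)"
proof (rule pmf_eqI)
  fix x :: "'a \<times> 'b"
  show "pmf (pair_pmf (pmf_of_set A) (pmf_of_set B)) x = pmf (pmf_of_set (A \<times> B)) x"
    using assms by (cases x) (simp add: pmf_pair card_cartesian_product indicator_def)
qed

lemma map_pmf_Pi_pmf_three_components:
  assumes A: "finite A" "i \<in> A" "j \<in> A" "k \<in> A" and distinct: "i \<noteq> j" "j \<noteq> k" "i \<noteq> k"
  shows "map_pmf (\<lambda>f. (f i, f j, f k)) (Pi_pmf A dflt (\<lambda>_. p)) = pair_pmf p (pair_pmf p p)"
proof (rule pmf_eqI)
  fix x :: "'b \<times> 'b \<times> 'b"
  obtain a b c where x: "x = (a, b, c)" by (cases x)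
  define B where "B = (\<lambda>y. if y = i then {a} else if y = j then {b} else if y = k then {c} else UNIV)"
  have preimage: "(\<lambda>f. (f i, f j, f k)) -` {x} = Pi A B"
    using A distinct by (fastforce simp: x B_def Pi_iff)
  have A_split: "A = insert i (insert j (insert k (A - {i, j, k})))"
    using A by auto
  have "pmf (map_pmf (\<lambda>f. (f i, f j, f k)) (Pi_pmf A dflt (\<lambda>_. p))) x
      = (\<Prod>y\<in>A. measure_pmf.prob p (B y))"
    using A by (simp add: pmf_map preimage measure_Pi_pmf_Pi)
  also have "\<dots> = pmf p a * pmf p b * pmf p c"
    using A distinct by (subst A_split) (simp add: B_def measure_pmf_single)
  finally show "pmf (map_pmf (\<lambda>f. (f i, f j, f k)) (Pi_pmf A dflt (\<lambda>_. p))) x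
      = pmf (pair_pmf p (pair_pmf p p)) x"
    by (simp add: x pmf_pair)
qed

context
  fixes U :: "'a set" and K :: nat and S :: "'a set set"
  assumes finite_U: "finite U"
  defines "S \<equiv> {c. c \<subseteq> U \<and> card c = K}"
begin

lemma finite_subsets_of_card: "finite S"
  unfolding S_def using finite_U by (auto intro: finite_subset[of _ "Pow U"])

lemma card_subsets_of_card: "card S = card U choose K"
  unfolding S_def using finite_U by (simp add: n_subsets)

lemma sum_disjnt_subsets_of_card:
  assumes "a \<subseteq> U"
  shows "(\<Sum>c\<in>S. of_bool (disjnt a c) :: real) = real ((card U - card a) choose K)"
proof -
  have "S \<inter> {c. disjnt a c} = {c. c \<subseteq> U - a \<and> card c = K}"
    unfolding S_def disjnt_def by auto
  moreover have "card (U - a) = card U - card a"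
    using assms finite_U by (simp add: card_Diff_subset finite_subset)
  ultimately show ?thesis
    using finite_subsets_of_card finite_U by (simp add: n_subsets)
qed

lemma sum_pairwise_intersecting_triples:
  "(\<Sum>a\<in>S. \<Sum>b\<in>S. \<Sum>c\<in>S. of_bool (\<not> disjnt a b \<and> \<not> disjnt b c \<and> \<not> disjnt a c) :: real)
   = (real (card U choose K) - real ((card U - K) choose K)) ^ 3 + real ((card U - K) choose K) ^ 3
     - real (card U choose K) * real ((card U - K) choose K) * real ((card U - 2 * K) choose K)"
proof -
  define N M R where "N = real (card U choose K)" and "M = real ((card U - K) choose K)"
    and "R = real ((card U - 2 * K) choose K)"
  let ?d = "\<lambda>x y. of_bool (disjnt x y) :: real"
  have sum_d: "(\<Sum>c\<in>S. ?d a c) = M" if "a \<in> S" for a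
    using that sum_disjnt_subsets_of_card[of a] by (simp add: S_def M_def)
  have sum_d_Un: "(\<Sum>c\<in>S. ?d (a \<union> b) c) = R" if "a \<in> S" "b \<in> S" "disjnt a b" for a b
  proof -
    have "card (a \<union> b) = 2 * K"
      using that finite_U by (auto simp: S_def card_Un_disjnt finite_subset)
    then show ?thesis
      using that sum_disjnt_subsets_of_card[of "a \<union> b"] by (simp add: S_def R_def)
  qed
  have inner: "(\<Sum>c\<in>S. of_bool (\<not> disjnt a b \<and> \<not> disjnt b c \<and> \<not> disjnt a c))
      = (1 - ?d a b) * (N - 2 * M + (\<Sum>c\<in>S. ?d (a \<union> b) c))" if "a \<in> S" "b \<in> S" for a b
  proof -
    have "of_bool (\<not> disjnt a b \<and> \<not> disjnt b c \<and> \<not> disjnt a c)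
        = (1 - ?d a b) * (1 - ?d a c - ?d b c + ?d (a \<union> b) c)" for c
      by (auto simp: disjnt_Un1)
    then have "(\<Sum>c\<in>S. of_bool (\<not> disjnt a b \<and> \<not> disjnt b c \<and> \<not> disjnt a c))
        = (1 - ?d a b) * (\<Sum>c\<in>S. 1 - ?d a c - ?d b c + ?d (a \<union> b) c)"
      by (simp only: sum_distrib_left)
    also have "(\<Sum>c\<in>S. 1 - ?d a c - ?d b c + ?d (a \<union> b) c) = N - 2 * M + (\<Sum>c\<in>S. ?d (a \<union> b) c)"
      using that by (simp add: sum.distrib sum_subtractf sum_d card_subsets_of_card N_def)
    finally show ?thesis .
  qed
  have triple_sum_d_Un: "(\<Sum>a\<in>S. \<Sum>b\<in>S. \<Sum>c\<in>S. ?d (a \<union> b) c) = N * M ^ 2"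
  proof -
    have "(\<Sum>b\<in>S. \<Sum>c\<in>S. ?d (a \<union> b) c) = (\<Sum>c\<in>S. ?d a c * (\<Sum>b\<in>S. ?d b c))" for a
      by (subst sum.swap) (simp add: of_bool_conj sum_distrib_left)
    then have "(\<Sum>a\<in>S. \<Sum>b\<in>S. \<Sum>c\<in>S. ?d (a \<union> b) c) = (\<Sum>a\<in>S. \<Sum>c\<in>S. ?d a c * (\<Sum>b\<in>S. ?d b c))"
      by simp
    also have "\<dots> = (\<Sum>a\<in>S. \<Sum>c\<in>S. ?d a c * M)"
      using sum_d by (simp add: disjnt_commute[of _ "_ :: 'a set"])
    also have "\<dots> = N * M ^ 2"
      using sum_d by (simp add: sum_distrib_right[symmetric] card_subsets_of_card N_def power2_eq_square)
    finally show ?thesis .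
  qed
  have sum_sum_d: "(\<Sum>a\<in>S. \<Sum>b\<in>S. ?d a b) = N * M"
    using sum_d by (simp add: card_subsets_of_card N_def)
  have "(\<Sum>a\<in>S. \<Sum>b\<in>S. \<Sum>c\<in>S. of_bool (\<not> disjnt a b \<and> \<not> disjnt b c \<and> \<not> disjnt a c))
      = (\<Sum>a\<in>S. \<Sum>b\<in>S. (N - 2 * M) - (N - 2 * M + R) * ?d a b + (\<Sum>c\<in>S. ?d (a \<union> b) c))"
  proof (intro sum.cong refl)
    fix a b assume ab: "a \<in> S" "b \<in> S"
    show "(\<Sum>c\<in>S. of_bool (\<not> disjnt a b \<and> \<not> disjnt b c \<and> \<not> disjnt a c))
        = (N - 2 * M) - (N - 2 * M + R) * ?d a b + (\<Sum>c\<in>S. ?d (a \<union> b) c)"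
      using inner[OF ab] sum_d_Un[OF ab] by (cases "disjnt a b") simp_all
  qed
  also have "\<dots> = N * N * (N - 2 * M) - (N - 2 * M + R) * (N * M) + N * M ^ 2"
    by (simp only: sum.distrib sum_subtractf sum_distrib_left[symmetric] sum_sum_d triple_sum_d_Un)
      (simp add: card_subsets_of_card N_def algebra_simps)
  also have "\<dots> = (N - M) ^ 3 + M ^ 3 - N * M * R"
    by (simp add: algebra_simps power2_eq_square power3_eq_cube)
  finally show ?thesis by (simp add: N_def M_def R_def)
qed

end

lemma q_rkg_eq: "q_rkg K P = real ((P - K) choose K) / real (P choose K)"
proof (cases "2 * K \<le> P")
  case False
  then have "P - K < K" by auto
  then show ?thesis by (simp add: q_rkg_def)
qed (simp add: q_rkg_def)

lemma r_rkg_eq: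
  assumes "1 \<le> K"
  shows "r_rkg K P = real ((P - 2 * K) choose K) / real (P choose K)"
proof (cases "3 * K \<le> P")
  case False
  then have "P - 2 * K < K" using assms by auto
  then show ?thesis by (simp add: r_rkg_def)
qed (simp add: r_rkg_def)

lemma beta_rkg_eq:
  assumes "1 \<le> K" "K \<le> P"
  defines "N \<equiv> real (P choose K)" and "M \<equiv> real ((P - K) choose K)"
    and "R \<equiv> real ((P - 2 * K) choose K)"
  shows "beta_rkg K P = ((N - M) ^ 3 + M ^ 3 - N * M * R) / N ^ 3"
proof -
  have "N \<noteq> 0" using assms by (simp add: N_def)
  have "beta_rkg K P = (1 - M / N) ^ 3 + (M / N) ^ 3 - M / N * (R / N)"
    using assms by (simp add: beta_rkg_def q_rkg_eq r_rkg_eq)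
  also have "\<dots> = ((N - M) ^ 3 + M ^ 3 - N * M * R) / N ^ 3"
    using \<open>N \<noteq> 0\<close> by (simp add: field_simps power3_eq_cube)
  finally show ?thesis .
qed

lemma expectation_chi:
  assumes K: "1 \<le> K" "K \<le> P"
    and ijk: "i \<in> {1..n}" "j \<in> {1..n}" "k \<in> {1..n}" "i \<noteq> j" "j \<noteq> k" "i \<noteq> k"
  shows "measure_pmf.expectation (key_rings_pmf n K P) (\<lambda>Ks. chi Ks i j k) = beta_rkg K P"
proof -
  define S where "S = {c. c \<subseteq> {1..P} \<and> card c = K}"
  define G :: "nat set \<times> nat set \<times> nat set \<Rightarrow> real" where
    "G = (\<lambda>(a, b, c). of_bool (\<not> disjnt a b \<and> \<not> disjnt b c \<and> \<not> disjnt a c))"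
  have S: "finite S" "card S = P choose K"
    using finite_subsets_of_card[of "{1..P}"] card_subsets_of_card[of "{1..P}"] by (simp_all add: S_def)
  then have "S \<noteq> {}" using K by auto
  have "measure_pmf.expectation (key_rings_pmf n K P) (\<lambda>Ks. chi Ks i j k)
      = measure_pmf.expectation (map_pmf (\<lambda>f. (f i, f j, f k)) (Pi_pmf {1..n} {} (\<lambda>_. pmf_of_set S))) G"
    using ijk by (simp add: key_rings_pmf_def key_ring_pmf_def S_def G_def chi_def rkg_adj_def disjnt_def of_bool_def)
  also have "map_pmf (\<lambda>f. (f i, f j, f k)) (Pi_pmf {1..n} {} (\<lambda>_. pmf_of_set S)) = pmf_of_set (S \<times> S \<times> S)"
    using ijk S \<open>S \<noteq> {}\<close> by (simp add: map_pmf_Pi_pmf_three_components pair_pmf_of_set)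
  also have "measure_pmf.expectation (pmf_of_set (S \<times> S \<times> S)) G = sum G (S \<times> S \<times> S) / card (S \<times> S \<times> S)"
    using S \<open>S \<noteq> {}\<close> by (intro integral_pmf_of_set) auto
  also have "sum G (S \<times> S \<times> S) = (\<Sum>a\<in>S. \<Sum>b\<in>S. \<Sum>c\<in>S. of_bool (\<not> disjnt a b \<and> \<not> disjnt b c \<and> \<not> disjnt a c))"
    by (simp add: G_def sum.cartesian_product)
  also have "real (card (S \<times> S \<times> S)) = real (P choose K) ^ 3"
    using S by (simp add: card_cartesian_product power3_eq_cube)
  also have "(\<Sum>a\<in>S. \<Sum>b\<in>S. \<Sum>c\<in>S. of_bool (\<not> disjnt a b \<and> \<not> disjnt b c \<and> \<not> disjnt a c))
      = (real (P choose K) - real ((P - K) choose K)) ^ 3 + real ((P - K) choose K) ^ 3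
        - real (P choose K) * real ((P - K) choose K) * real ((P - 2 * K) choose K)"
    using sum_pairwise_intersecting_triples[of "{1..P}" K] by (simp add: S_def del: sum_of_bool_eq)
  finally show ?thesis
    by (simp only: beta_rkg_eq[OF K])
qed

lemma card_increasing_triples:
  "card {(i, j, k). 1 \<le> i \<and> i < j \<and> j < k \<and> k \<le> (n::nat)} = n choose 3"
proof -
  define T where "T = {(i, j, k). 1 \<le> i \<and> i < j \<and> j < k \<and> k \<le> (n::nat)}"
  define h where "h = (\<lambda>(i::nat, j::nat, k::nat). {i, j, k})"
  have inj: "inj_on h T"
  proof (rule inj_onI)
    fix x y assume "x \<in> T" "y \<in> T" "h x = h y"
    then obtain i j k i' j' k' where x: "x = (i, j, k)" "i < j" "j < k"
      and y: "y = (i', j', k')" "i' < j'" "j' < k'" and "{i, j, k} = {i', j', k'}"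
      by (auto simp: T_def h_def)
    then have "i \<in> {i', j', k'}" "i' \<in> {i, j, k}" "k \<in> {i', j', k'}" "k' \<in> {i, j, k}"
      "j \<in> {i', j', k'}" "j' \<in> {i, j, k}"
      by blast+
    with x y show "x = y" by auto
  qed
  have image: "h ` T = {A. A \<subseteq> {1..n} \<and> card A = 3}"
  proof (intro set_eqI iffI)
    fix A assume "A \<in> h ` T"
    then show "A \<in> {A. A \<subseteq> {1..n} \<and> card A = 3}" by (auto simp: T_def h_def)
  next
    fix A assume A: "A \<in> {A. A \<subseteq> {1..n} \<and> card A = 3}"
    then have "finite A" by (auto intro: finite_subset)
    define xs where "xs = sorted_list_of_set A"
    have "length xs = 3" using A \<open>finite A\<close> by (simp add: xs_def)
    then obtain i j k where ijk: "xs = [i, j, k]"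
      by (auto simp: length_Suc_conv numeral_3_eq_3)
    have "sorted_wrt (<) xs" by (simp add: xs_def)
    then have "i < j" "j < k" using ijk by auto
    have "set xs = A" using \<open>finite A\<close> by (simp add: xs_def)
    then have "A = {i, j, k}" using ijk by auto
    moreover have "(i, j, k) \<in> T"
      using A \<open>A = {i, j, k}\<close> \<open>i < j\<close> \<open>j < k\<close> by (auto simp: T_def)
    ultimately show "A \<in> h ` T"
      by (auto simp: h_def intro: image_eqI[of _ _ "(i, j, k)"])
  qed
  have "card T = card (h ` T)" using inj by (simp add: card_image)
  also have "\<dots> = n choose 3" by (simp add: image n_subsets)
  finally show ?thesis by (simp add: T_def)
qed

lemma expectation_triangles:
  assumes "1 \<le> K" "K \<le> P"
  shows "measure_pmf.expectation (key_rings_pmf n K P) (triangles n) = real (n choose 3) * beta_rkg K P"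
proof -
  define T where "T = {(i, j, k). 1 \<le> i \<and> i < j \<and> j < k \<and> k \<le> n}"
  have "finite T"
    by (rule finite_subset[of _ "{1..n} \<times> {1..n} \<times> {1..n}"]) (auto simp: T_def)
  have integrable: "integrable (key_rings_pmf n K P) (\<lambda>Ks. chi Ks i j k)" for i j k
    by (rule measure_pmf.integrable_const_bound[where B = 1]) (auto simp: chi_def)
  have "measure_pmf.expectation (key_rings_pmf n K P) (triangles n)
      = measure_pmf.expectation (key_rings_pmf n K P) (\<lambda>Ks. \<Sum>(i, j, k)\<in>T. chi Ks i j k)"
    by (simp add: triangles_def [abs_def] T_def)
  also have "\<dots> = (\<Sum>t\<in>T. measure_pmf.expectation (key_rings_pmf n K P)
                      (\<lambda>Ks. case t of (i, j, k) \<Rightarrow> chi Ks i j k))"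
    using \<open>finite T\<close> integrable by (intro Bochner_Integration.integral_sum) (auto split: prod.splits)
  also have "\<dots> = (\<Sum>t\<in>T. beta_rkg K P)"
    using assms by (intro sum.cong refl) (auto simp: T_def intro: expectation_chi)
  also have "\<dots> = real (n choose 3) * beta_rkg K P"
    using card_increasing_triples[of n, folded T_def] by simp
  finally show ?thesis .
qed

theorem proposition1:
  fixes K P n :: nat
  assumes "1 \<le> K" and "K \<le> P" and "3 \<le> n"
  shows "measure_pmf.expectation (key_rings_pmf n K P) (\<lambda>Ks. chi Ks 1 2 3) = beta_rkg K P
       \<and> measure_pmf.expectation (key_rings_pmf n K P) (triangles n) = real (n choose 3) * beta_rkg K P"
  using assms by (auto intro: expectation_chi expectation_triangles)

end
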